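(* Let $\mathbb{F}$ be a field, $p,q\in\mathbb{F}[t]$ monic of degree $2$, and $\mathcal{W}_{p,q}=\mathbb{F}\langle a,b\rangle/(p(a),q(b))$. A nonzero element $x\in\mathcal{W}_{p,q}$ is a zero divisor (i.e. there is $y\neq0$ with $xy=0$ or $yx=0$) if and only if $N(x)=0$, where $N(x)=xx^\star$.
   Context: $\mathcal{W}_{p,q}$ is the free associative unital $\mathbb{F}$-algebra on two generators modulo the ideal generated by $p(a),q(b)$. For a $2$-dimensional algebra set $x^\star=\mathrm{tr}(x)-x$; the adjunction $x\mapsto x^\star$ of $\mathcal{W}_{p,q}$ is the unique $\mathbb{F}$-linear anti-automorphism agreeing with this on $\mathbb{F}[a]$ and $\mathbb{F}[b]$ (so $a^\star=\mathrm{tr}(p)-a$, $b^\star=\mathrm{tr}(q)-b$, where $\mathrm{tr}(p)$ is minus the coefficient of $t$). The norm $N(x)=xx^\star=x^\star x$ lies in the center of $\mathcal{W}_{p,q}$. *)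

theory Defs
  imports "HOL-Computational_Algebra.Polynomial"
begin

text \<open>The free associative unital algebra F<a,b> is modelled concretely as
finitely supported functions from words over the alphabet {a,b} to F.
Letter True stands for the generator a, letter False for b.\<close>

type_synonym 'k falg = "bool list \<Rightarrow> 'k"

definition FA :: "'k::field falg set" where
  "FA = {f. finite {w. f w \<noteq> 0}}"

definition fa_add :: "'k::field falg \<Rightarrow> 'k falg \<Rightarrow> 'k falg" where
  "fa_add f g = (\<lambda>w. f w + g w)"

definition fa_scale :: "'k::field \<Rightarrow> 'k falg \<Rightarrow> 'k falg" where
  "fa_scale c f = (\<lambda>w. c * f w)"

definition fa_mult :: "'k::field falg \<Rightarrow> 'k falg \<Rightarrow> 'k falg" where
  "fa_mult f g = (\<lambda>w. \<Sum>i\<le>length w. f (take i w) * g (drop i w))"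

definition fa_word :: "bool list \<Rightarrow> 'k::field falg" where
  "fa_word v = (\<lambda>w. if w = v then 1 else 0)"

definition fa_one :: "'k::field falg" where
  "fa_one = fa_word []"

definition fa_poly_gen :: "'k::field poly \<Rightarrow> bool \<Rightarrow> 'k falg" where
  "fa_poly_gen p c = (\<lambda>w. if w = replicate (length w) c then coeff p (length w) else 0)"

inductive_set W_ideal :: "'k::field poly \<Rightarrow> 'k poly \<Rightarrow> 'k falg set"
  for p q where
  gen_p: "fa_poly_gen p True \<in> W_ideal p q"
| gen_q: "fa_poly_gen q False \<in> W_ideal p q"
| add: "f \<in> W_ideal p q \<Longrightarrow> g \<in> W_ideal p q \<Longrightarrow> fa_add f g \<in> W_ideal p q"
| mult: "f \<in> W_ideal p q \<Longrightarrow> g \<in> FA \<Longrightarrow> h \<in> FA \<Longrightarrow> fa_mult g (fa_mult f h) \<in> W_ideal p q"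

definition ptr :: "'k::field poly \<Rightarrow> 'k" where
  "ptr p = - coeff p 1"

text \<open>Adjunction: the linear anti-homomorphism with a* = tr(p) - a, b* = tr(q) - b,
defined on F<a,b>; it descends to the quotient W_{p,q}.\<close>
definition gen_star :: "'k::field poly \<Rightarrow> 'k poly \<Rightarrow> bool \<Rightarrow> 'k falg" where
  "gen_star p q c = (\<lambda>w. (if c then ptr p else ptr q) * fa_one w - fa_word [c] w)"

fun word_star :: "'k::field poly \<Rightarrow> 'k poly \<Rightarrow> bool list \<Rightarrow> 'k falg" where
  "word_star p q [] = fa_one"
| "word_star p q (c # w) = fa_mult (word_star p q w) (gen_star p q c)"

definition fa_star :: "'k::field poly \<Rightarrow> 'k poly \<Rightarrow> 'k falg \<Rightarrow> 'k falg" where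
  "fa_star p q f = (\<lambda>u. \<Sum>w\<in>{w. f w \<noteq> 0}. f w * word_star p q w u)"

definition W_norm :: "'k::field poly \<Rightarrow> 'k poly \<Rightarrow> 'k falg \<Rightarrow> 'k falg" where
  "W_norm p q x = fa_mult x (fa_star p q x)"

end

(* Send a to the companion matrix A of p and b to B = t + C, where C is the companion matrix of
   q(X + t); both lie in M_2(F[t]) and p(A) = q(B) = 0, so this defines a homomorphism rep on
   W_{p,q}. It turns the adjunction into the adjugate, hence rep (N x) = det (rep x) times 1.
   The point is that rep is injective. Modulo the ideal every element is a combination of
   alternating words (rewrite a^2 and b^2 with p and q), and the images of these are linearly
   independent: a word with m letters b has degree at most 2m in t, and the coefficients of
   t^(2m) in the images of the alternating words with exactly m letters b are independent.
   So x is a zero divisor iff rep x is one in M_2(F(t)), iff det (rep x) = 0, iff N x = 0. *)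

theory Submission
  imports Defs
begin

section \<open>2\<times>2 matrices over a commutative ring\<close>

datatype 'a mat2 = Mat2 (m11: 'a) (m12: 'a) (m21: 'a) (m22: 'a)

instantiation mat2 :: (comm_ring_1) ring_1
begin
definition "0 = Mat2 0 0 0 0"
definition "1 = Mat2 1 0 0 1"
definition "M + N = Mat2 (m11 M + m11 N) (m12 M + m12 N) (m21 M + m21 N) (m22 M + m22 N)"
definition "M - N = Mat2 (m11 M - m11 N) (m12 M - m12 N) (m21 M - m21 N) (m22 M - m22 N)"
definition "- M = Mat2 (- m11 M) (- m12 M) (- m21 M) (- m22 M)"
definition "M * N = Mat2 (m11 M * m11 N + m12 M * m21 N) (m11 M * m12 N + m12 M * m22 N)
   (m21 M * m11 N + m22 M * m21 N) (m21 M * m12 N + m22 M * m22 N)"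
instance
  by standard (auto simp: zero_mat2_def one_mat2_def plus_mat2_def minus_mat2_def
      uminus_mat2_def times_mat2_def algebra_simps intro!: mat2.expand)
end

lemma mat2_eq_iff: "M = N \<longleftrightarrow> m11 M = m11 N \<and> m12 M = m12 N \<and> m21 M = m21 N \<and> m22 M = m22 N"
  by (auto intro: mat2.expand)

lemma mat2_entries [simp]:
  fixes M N :: "'a::comm_ring_1 mat2"
  shows "m11 0 = 0" "m12 0 = 0" "m21 0 = 0" "m22 0 = 0"
    and "m11 1 = 1" "m12 1 = 0" "m21 1 = 0" "m22 1 = 1"
    and "m11 (M + N) = m11 M + m11 N" "m12 (M + N) = m12 M + m12 N"
    and "m21 (M + N) = m21 M + m21 N" "m22 (M + N) = m22 M + m22 N"
    and "m11 (M - N) = m11 M - m11 N" "m12 (M - N) = m12 M - m12 N"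
    and "m21 (M - N) = m21 M - m21 N" "m22 (M - N) = m22 M - m22 N"
    and "m11 (- M) = - m11 M" "m12 (- M) = - m12 M" "m21 (- M) = - m21 M" "m22 (- M) = - m22 M"
    and "m11 (M * N) = m11 M * m11 N + m12 M * m21 N" "m12 (M * N) = m11 M * m12 N + m12 M * m22 N"
    and "m21 (M * N) = m21 M * m11 N + m22 M * m21 N" "m22 (M * N) = m21 M * m12 N + m22 M * m22 N"
  by (simp_all add: zero_mat2_def one_mat2_def plus_mat2_def minus_mat2_def uminus_mat2_def
      times_mat2_def)

definition scalar_mat2 :: "'a::comm_ring_1 \<Rightarrow> 'a mat2" where
  "scalar_mat2 c = Mat2 c 0 0 c"

lemma scalar_mat2_simps [simp]:
  "scalar_mat2 0 = 0" "scalar_mat2 1 = 1" "scalar_mat2 (a + b) = scalar_mat2 a + scalar_mat2 b"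
  "scalar_mat2 (a * b) = scalar_mat2 a * scalar_mat2 b" "scalar_mat2 (- a) = - scalar_mat2 a"
  by (simp_all add: scalar_mat2_def mat2_eq_iff)

lemma scalar_mat2_commute: "scalar_mat2 c * M = M * scalar_mat2 c"
  by (simp add: scalar_mat2_def mat2_eq_iff algebra_simps)

lemma scalar_mat2_mult_eq_0_iff:
  fixes M :: "'a::idom mat2"
  shows "scalar_mat2 c * M = 0 \<longleftrightarrow> c = 0 \<or> M = 0"
  by (auto simp: scalar_mat2_def mat2_eq_iff)

definition adj2 :: "'a::comm_ring_1 mat2 \<Rightarrow> 'a mat2" where
  "adj2 M = Mat2 (m22 M) (- m12 M) (- m21 M) (m11 M)"

definition det2 :: "'a::comm_ring_1 mat2 \<Rightarrow> 'a" where
  "det2 M = m11 M * m22 M - m12 M * m21 M"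

lemma adj2_add: "adj2 (M + N) = adj2 M + adj2 N"
  by (simp add: adj2_def mat2_eq_iff)

lemma adj2_mult: "adj2 (M * N) = adj2 N * adj2 M"
  by (simp add: adj2_def mat2_eq_iff algebra_simps)

lemma adj2_scalar_mult: "adj2 (scalar_mat2 c * M) = scalar_mat2 c * adj2 M"
  by (simp add: adj2_def scalar_mat2_def mat2_eq_iff)

lemma adj2_sum: "adj2 (sum f S) = (\<Sum>x\<in>S. adj2 (f x))"
  by (induct S rule: infinite_finite_induct) (auto simp: adj2_add adj2_def mat2_eq_iff)

lemma adj2_eq_0_iff [simp]: "adj2 M = 0 \<longleftrightarrow> M = 0"
  by (auto simp: adj2_def mat2_eq_iff)

lemma mult_adj2: "M * adj2 M = scalar_mat2 (det2 M)" "adj2 M * M = scalar_mat2 (det2 M)"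
  by (simp_all add: adj2_def scalar_mat2_def det2_def mat2_eq_iff algebra_simps)

lemma det2_eq_0_if_mult_right_eq_0:
  fixes M N :: "'a::idom mat2"
  assumes "M * N = 0" and "N \<noteq> 0"
  shows "det2 M = 0"
proof -
  have "scalar_mat2 (det2 M) * N = adj2 M * (M * N)"
    by (simp add: mult_adj2 flip: mult.assoc)
  with assms show ?thesis
    by (simp add: scalar_mat2_mult_eq_0_iff)
qed

lemma det2_eq_0_if_mult_left_eq_0:
  fixes M N :: "'a::idom mat2"
  assumes "N * M = 0" and "N \<noteq> 0"
  shows "det2 M = 0"
proof -
  have "scalar_mat2 (det2 M) * N = (N * M) * adj2 M"
    by (simp add: mult_adj2 scalar_mat2_commute mult.assoc)
  with assms show ?thesis
    by (simp add: scalar_mat2_mult_eq_0_iff)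
qed

definition coeff_mat2 :: "'a::zero poly mat2 \<Rightarrow> nat \<Rightarrow> 'a mat2" where
  "coeff_mat2 M n = map_mat2 (\<lambda>a. coeff a n) M"

definition degree_le_mat2 :: "nat \<Rightarrow> 'a::zero poly mat2 \<Rightarrow> bool" where
  "degree_le_mat2 n M \<longleftrightarrow> (\<forall>a\<in>set_mat2 M. degree a \<le> n)"

lemma set_mat2_eq: "set_mat2 M = {m11 M, m12 M, m21 M, m22 M}"
  by (cases M) simp

lemma coeff_mat2_entries [simp]:
  "m11 (coeff_mat2 M n) = coeff (m11 M) n" "m12 (coeff_mat2 M n) = coeff (m12 M) n"
  "m21 (coeff_mat2 M n) = coeff (m21 M) n" "m22 (coeff_mat2 M n) = coeff (m22 M) n"
  by (simp_all add: coeff_mat2_def mat2.map_sel)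

lemma coeff_mat2_0 [simp]: "coeff_mat2 0 n = 0"
  by (simp add: mat2_eq_iff)

lemma coeff_mat2_add: "coeff_mat2 (M + N) n = coeff_mat2 M n + coeff_mat2 N n"
  by (simp add: mat2_eq_iff)

lemma coeff_mat2_sum: "coeff_mat2 (sum f S) n = (\<Sum>x\<in>S. coeff_mat2 (f x) n)"
  by (induct S rule: infinite_finite_induct) (auto simp: coeff_mat2_add)

lemma coeff_mat2_eq_0: "degree_le_mat2 d M \<Longrightarrow> d < n \<Longrightarrow> coeff_mat2 M n = 0"
  by (simp add: degree_le_mat2_def set_mat2_eq mat2_eq_iff coeff_eq_0)

lemma degree_le_mat2_1: "degree_le_mat2 0 1"
  by (simp add: degree_le_mat2_def set_mat2_eq)

lemma coeff_mult_degree_le: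
  fixes a b :: "'a::comm_semiring_1 poly"
  assumes "degree a \<le> m" and "degree b \<le> n"
  shows "coeff (a * b) (m + n) = coeff a m * coeff b n"
proof (cases "degree a = m \<and> degree b = n")
  case True
  then show ?thesis using coeff_mult_degree_sum[of a b] by simp
next
  case False
  with assms have "degree a < m \<or> degree b < n" by linarith
  moreover have "degree (a * b) \<le> degree a + degree b" by (rule degree_mult_le)
  ultimately have "degree (a * b) < m + n" and "coeff a m * coeff b n = 0"
    using assms by (auto simp: coeff_eq_0)
  then show ?thesis by (simp add: coeff_eq_0)
qed

lemma degree_le_mat2_mult:
  fixes M N :: "'a::comm_ring_1 poly mat2"
  assumes "degree_le_mat2 m M" and "degree_le_mat2 n N"
  shows "degree_le_mat2 (m + n) (M * N)"
  using assms unfolding degree_le_mat2_def set_mat2_eq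
  by (auto intro!: degree_add_le order.trans[OF degree_mult_le] add_mono)

lemma coeff_mat2_mult_top:
  fixes M N :: "'a::comm_ring_1 poly mat2"
  assumes "degree_le_mat2 m M" and "degree_le_mat2 n N"
  shows "coeff_mat2 (M * N) (m + n) = coeff_mat2 M m * coeff_mat2 N n"
  using assms unfolding degree_le_mat2_def set_mat2_eq
  by (simp add: mat2_eq_iff coeff_mult_degree_le)

definition const_mat2 :: "'a::comm_ring_1 \<Rightarrow> 'a poly mat2" where
  "const_mat2 c = scalar_mat2 [:c:]"

lemma const_mat2_simps [simp]:
  "const_mat2 0 = 0" "const_mat2 1 = 1" "const_mat2 (a + b) = const_mat2 a + const_mat2 b"
  "const_mat2 (a * b) = const_mat2 a * const_mat2 b" "const_mat2 (- a) = - const_mat2 a"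
  by (simp_all add: const_mat2_def one_pCons scalar_mat2_def mat2_eq_iff mult_to_poly)

lemma const_mat2_sum: "const_mat2 (sum f S) = (\<Sum>x\<in>S. const_mat2 (f x))"
  by (induct S rule: infinite_finite_induct) auto

lemma const_mat2_commute: "const_mat2 c * M = M * const_mat2 c"
  by (simp add: const_mat2_def scalar_mat2_commute)

lemma const_mat2_mult_mult: "const_mat2 a * M * (const_mat2 b * N) = const_mat2 (a * b) * (M * N)"
  by (metis const_mat2_commute const_mat2_simps(4) mult.assoc)

lemma adj2_const_mult: "adj2 (const_mat2 c * M) = const_mat2 c * adj2 M"
  by (simp add: const_mat2_def adj2_scalar_mult)

lemma coeff_mat2_const_mult: "coeff_mat2 (const_mat2 c * M) n = scalar_mat2 c * coeff_mat2 M n"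
  by (simp add: const_mat2_def scalar_mat2_def mat2_eq_iff)

abbreviation fa_supp :: "'k::field falg \<Rightarrow> bool list set" where
  "fa_supp f \<equiv> {w. f w \<noteq> 0}"

lemma FA_iff: "f \<in> FA \<longleftrightarrow> finite (fa_supp f)"
  by (simp add: FA_def)

lemma FA_subset: "fa_supp f \<subseteq> fa_supp g \<union> fa_supp h \<Longrightarrow> g \<in> FA \<Longrightarrow> h \<in> FA \<Longrightarrow> f \<in> FA"
  by (auto simp: FA_iff intro: finite_subset)

lemma FA_add: "f \<in> FA \<Longrightarrow> g \<in> FA \<Longrightarrow> fa_add f g \<in> FA"
  by (rule FA_subset[of _ f g]) (auto simp: fa_add_def)

lemma FA_scale: "f \<in> FA \<Longrightarrow> fa_scale c f \<in> FA"
  by (rule FA_subset[of _ f f]) (auto simp: fa_scale_def)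

lemma FA_word: "fa_word v \<in> FA"
  by (auto simp: FA_iff fa_word_def intro: finite_subset[of _ "{v}"])

lemma FA_one: "fa_one \<in> FA"
  by (simp add: fa_one_def FA_word)

lemma fa_supp_fa_poly_gen: "fa_supp (fa_poly_gen P c) \<subseteq> (\<lambda>n. replicate n c) ` {..degree P}"
proof
  fix w
  assume "w \<in> fa_supp (fa_poly_gen P c)"
  then have "w = replicate (length w) c" and "coeff P (length w) \<noteq> 0"
    by (auto simp: fa_poly_gen_def split: if_splits)
  then show "w \<in> (\<lambda>n. replicate n c) ` {..degree P}"
    by (metis atMost_iff image_eqI le_degree)
qed

lemma FA_poly_gen: "fa_poly_gen P c \<in> FA"
  unfolding FA_iff by (rule finite_subset[OF fa_supp_fa_poly_gen]) simp

lemma fa_supp_fa_mult: "fa_supp (fa_mult f g) \<subseteq> (\<lambda>(u, v). u @ v) ` (fa_supp f \<times> fa_supp g)"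
proof
  fix w
  assume "w \<in> fa_supp (fa_mult f g)"
  then have "(\<Sum>i\<le>length w. f (take i w) * g (drop i w)) \<noteq> 0"
    by (simp add: fa_mult_def)
  then obtain i where "f (take i w) * g (drop i w) \<noteq> 0"
    by (meson sum.not_neutral_contains_not_neutral)
  then show "w \<in> (\<lambda>(u, v). u @ v) ` (fa_supp f \<times> fa_supp g)"
    by (auto intro!: image_eqI[where x = "(take i w, drop i w)"])
qed

lemma FA_mult: "f \<in> FA \<Longrightarrow> g \<in> FA \<Longrightarrow> fa_mult f g \<in> FA"
  unfolding FA_iff by (rule finite_subset[OF fa_supp_fa_mult]) simp

lemma FA_sum: "finite S \<Longrightarrow> (\<And>i. i \<in> S \<Longrightarrow> h i \<in> FA) \<Longrightarrow> (\<lambda>w. \<Sum>i\<in>S. h i w) \<in> FA"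
proof (induct S rule: finite_induct)
  case empty
  then show ?case by (simp add: FA_iff)
next
  case (insert a S)
  then have "(\<lambda>w. \<Sum>i\<in>insert a S. h i w) = fa_add (h a) (\<lambda>w. \<Sum>i\<in>S. h i w)"
    by (simp add: fa_add_def)
  with insert show ?case by (simp add: FA_add)
qed

lemma fa_mult_conv:
  assumes "finite S" "finite T" "fa_supp f \<subseteq> S" "fa_supp g \<subseteq> T"
  shows "fa_mult f g w = (\<Sum>x | x \<in> S \<times> T \<and> fst x @ snd x = w. f (fst x) * g (snd x))"
proof -
  let ?h = "\<lambda>x. f (fst x) * g (snd x)"
  let ?P = "{(u, v). u @ v = w}"
  have inj: "inj_on (\<lambda>i. (take i w, drop i w)) {..length w}"
    by (rule inj_onI) (metis atMost_iff length_take min.absorb2 prod.inject)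
  have split_img: "(\<lambda>i. (take i w, drop i w)) ` {..length w} = ?P"
  proof
    show "?P \<subseteq> (\<lambda>i. (take i w, drop i w)) ` {..length w}"
    proof
      fix x
      assume "x \<in> ?P"
      then obtain u v where "x = (u, v)" and "u @ v = w" by auto
      then show "x \<in> (\<lambda>i. (take i w, drop i w)) ` {..length w}"
        by (auto intro!: image_eqI[where x = "length u"])
    qed
  qed auto
  have "fa_mult f g w = (\<Sum>i\<le>length w. ?h (take i w, drop i w))"
    by (simp add: fa_mult_def)
  also have "\<dots> = sum ?h ?P"
    using sum.reindex[OF inj, of ?h] split_img by simp
  also have "\<dots> = sum ?h (?P \<inter> S \<times> T)"
    using assms by (intro sum.mono_neutral_right) (auto simp flip: split_img)
  also have "?P \<inter> S \<times> T = {x. x \<in> S \<times> T \<and> fst x @ snd x = w}"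
    by auto
  finally show ?thesis .
qed

lemma fa_mult_word_left:
  "fa_mult (fa_word u) g w = (if take (length u) w = u then g (drop (length u) w) else 0)"
proof -
  define prefix where "prefix \<longleftrightarrow> take (length u) w = u"
  have "take i w = u \<longleftrightarrow> i = length u \<and> prefix" if "i \<le> length w" for i
    using that unfolding prefix_def by (auto simp: min_def)
  then have "fa_mult (fa_word u) g w
      = (\<Sum>i\<le>length w. if i = length u \<and> prefix then g (drop i w) else 0)"
    unfolding fa_mult_def fa_word_def by (intro sum.cong) auto
  moreover have "length u \<le> length w" if prefix
    using that unfolding prefix_def by (metis length_take min.bounded_iff order_refl)
  ultimately show ?thesis
    unfolding prefix_def[symmetric] by (cases prefix) auto
qed

lemma fa_mult_word_right:
  "fa_mult g (fa_word v) w = (if length v \<le> length w \<and> drop (length w - length v) w = v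
      then g (take (length w - length v) w) else 0)"
proof -
  define suffix where "suffix \<longleftrightarrow> length v \<le> length w \<and> drop (length w - length v) w = v"
  have "fa_mult g (fa_word v) w
      = (\<Sum>i\<le>length w. if i = length w - length v \<and> suffix then g (take i w) else 0)"
    unfolding fa_mult_def fa_word_def suffix_def by (intro sum.cong) auto
  then show ?thesis
    unfolding suffix_def[symmetric] by (cases suffix) simp_all
qed

lemma fa_mult_one_left: "fa_mult fa_one f = f"
  by (rule ext) (simp add: fa_one_def fa_mult_word_left)

lemma fa_mult_one_right: "fa_mult f fa_one = f"
  by (rule ext) (simp add: fa_one_def fa_mult_word_right)

lemma fa_mult_scale_left: "fa_mult (fa_scale c f) g = fa_scale c (fa_mult f g)"
  by (simp add: fa_mult_def fa_scale_def sum_distrib_left mult.assoc)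

lemma fa_sandwich_at: "fa_mult (fa_word u) (fa_mult f (fa_word v)) (u @ m @ v) = f m"
  by (simp add: fa_mult_word_left fa_mult_word_right)

lemma fa_supp_fa_sandwich:
  assumes "fa_mult (fa_word u) (fa_mult f (fa_word v)) w \<noteq> 0"
  obtains m where "w = u @ m @ v"
proof -
  let ?r = "drop (length u) w"
  from assms have "take (length u) w = u" and "drop (length ?r - length v) ?r = v"
    by (auto simp: fa_mult_word_left fa_mult_word_right split: if_splits)
  then have "w = u @ take (length ?r - length v) ?r @ v"
    by (metis append_take_drop_id)
  then show thesis by (rule that)
qed

lemma fa_supp_sandwich_poly_gen:
  "fa_supp (fa_mult (fa_word u) (fa_mult (fa_poly_gen P c) (fa_word v)))
    \<subseteq> (\<lambda>n. u @ replicate n c @ v) ` {..degree P}"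
proof
  fix x
  assume x: "x \<in> fa_supp (fa_mult (fa_word u) (fa_mult (fa_poly_gen P c) (fa_word v)))"
  then obtain m where m: "x = u @ m @ v"
    by (auto elim: fa_supp_fa_sandwich)
  with x have "m \<in> fa_supp (fa_poly_gen P c)"
    by (simp add: fa_sandwich_at)
  with m fa_supp_fa_poly_gen show "x \<in> (\<lambda>n. u @ replicate n c @ v) ` {..degree P}"
    by blast
qed

lemma W_ideal_subset_FA: "f \<in> W_ideal p q \<Longrightarrow> f \<in> FA"
  by (induct rule: W_ideal.induct) (simp_all add: FA_poly_gen FA_add FA_mult)

lemma W_ideal_scale: "f \<in> W_ideal p q \<Longrightarrow> fa_scale c f \<in> W_ideal p q"
  using W_ideal.mult[of f p q "fa_scale c fa_one" fa_one]
  by (simp add: FA_scale FA_one fa_mult_one_right fa_mult_scale_left fa_mult_one_left)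

lemma W_ideal_zero: "(\<lambda>w. 0) \<in> W_ideal p q"
  using W_ideal_scale[OF W_ideal.gen_p, of 0] by (simp add: fa_scale_def)

lemma W_ideal_sandwich:
  "fa_mult (fa_word u) (fa_mult (fa_poly_gen (if c then p else q) c) (fa_word v)) \<in> W_ideal p q"
  by (cases c) (auto intro!: W_ideal.mult W_ideal.gen_p W_ideal.gen_q FA_word)

definition word_eval :: "'a::monoid_mult \<Rightarrow> 'a \<Rightarrow> bool list \<Rightarrow> 'a" where
  "word_eval A B w = prod_list (map (\<lambda>c. if c then A else B) w)"

lemma word_eval_simps [simp]:
  "word_eval A B [] = 1" "word_eval A B (c # w) = (if c then A else B) * word_eval A B w"
  by (simp_all add: word_eval_def)

lemma word_eval_append: "word_eval A B (u @ v) = word_eval A B u * word_eval A B v"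
  by (simp add: word_eval_def)

lemma word_eval_replicate: "word_eval A B (replicate n c) = (if c then A else B) ^ n"
  by (simp add: word_eval_def)

lemma degree_le_mat2_word_eval:
  assumes "degree_le_mat2 m A" and "degree_le_mat2 n B"
  shows "degree_le_mat2 (m * count_list w True + n * count_list w False) (word_eval A B w)"
proof (induct w)
  case Nil
  show ?case by (simp add: degree_le_mat2_1)
next
  case (Cons c w)
  then show ?case
    using degree_le_mat2_mult[OF assms(1) Cons] degree_le_mat2_mult[OF assms(2) Cons]
    by (simp add: algebra_simps)
qed

lemma coeff_mat2_word_eval:
  assumes "degree_le_mat2 m A" and "degree_le_mat2 n B"
  shows "coeff_mat2 (word_eval A B w) (m * count_list w True + n * count_list w False)
    = word_eval (coeff_mat2 A m) (coeff_mat2 B n) w"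
proof (induct w)
  case Nil
  show ?case by (simp add: mat2_eq_iff)
next
  case (Cons c w)
  note deg = degree_le_mat2_word_eval[OF assms, of w]
  show ?case
    using Cons coeff_mat2_mult_top[OF assms(1) deg] coeff_mat2_mult_top[OF assms(2) deg]
    by (simp add: algebra_simps)
qed

definition fa_eval :: "'k::field poly mat2 \<Rightarrow> 'k poly mat2 \<Rightarrow> 'k falg \<Rightarrow> 'k poly mat2" where
  "fa_eval A B f = (\<Sum>w\<in>fa_supp f. const_mat2 (f w) * word_eval A B w)"

lemma fa_eval_superset:
  assumes "finite S" and "fa_supp f \<subseteq> S"
  shows "fa_eval A B f = (\<Sum>w\<in>S. const_mat2 (f w) * word_eval A B w)"
  unfolding fa_eval_def by (rule sum.mono_neutral_left) (use assms in auto)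

lemma fa_eval_add:
  assumes "f \<in> FA" and "g \<in> FA"
  shows "fa_eval A B (fa_add f g) = fa_eval A B f + fa_eval A B g"
proof -
  let ?S = "fa_supp f \<union> fa_supp g"
  have S: "finite ?S" using assms by (simp add: FA_iff)
  have "fa_eval A B (fa_add f g) = (\<Sum>w\<in>?S. const_mat2 (fa_add f g w) * word_eval A B w)"
    by (rule fa_eval_superset[OF S]) (auto simp: fa_add_def)
  also have "\<dots> = (\<Sum>w\<in>?S. const_mat2 (f w) * word_eval A B w)
      + (\<Sum>w\<in>?S. const_mat2 (g w) * word_eval A B w)"
    by (simp add: fa_add_def distrib_right sum.distrib)
  also have "\<dots> = fa_eval A B f + fa_eval A B g"
    by (simp add: fa_eval_superset[OF S])
  finally show ?thesis .
qed

lemma fa_eval_scale: "fa_eval A B (fa_scale c f) = const_mat2 c * fa_eval A B f"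
proof (cases "c = 0")
  case True
  then show ?thesis by (simp add: fa_eval_def fa_scale_def)
next
  case False
  then have "fa_supp (fa_scale c f) = fa_supp f"
    by (simp add: fa_scale_def)
  then have "fa_eval A B (fa_scale c f)
      = (\<Sum>w\<in>fa_supp f. const_mat2 c * (const_mat2 (f w) * word_eval A B w))"
    unfolding fa_eval_def by (simp add: fa_scale_def mult.assoc)
  then show ?thesis
    by (simp add: fa_eval_def sum_distrib_left)
qed

lemma fa_eval_word: "fa_eval A B (fa_word v) = word_eval A B v"
  by (subst fa_eval_superset[of "{v}"]) (auto simp: fa_word_def)

lemma fa_eval_mult:
  assumes "f \<in> FA" and "g \<in> FA"
  shows "fa_eval A B (fa_mult f g) = fa_eval A B f * fa_eval A B g"
proof -
  let ?S = "fa_supp f" and ?T = "fa_supp g"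
  let ?U = "(\<lambda>(u, v). u @ v) ` (?S \<times> ?T)"
  have S: "finite ?S" and T: "finite ?T" using assms by (simp_all add: FA_iff)
  then have U: "finite ?U" by simp
  have "fa_eval A B (fa_mult f g) = (\<Sum>w\<in>?U. const_mat2 (fa_mult f g w) * word_eval A B w)"
    by (rule fa_eval_superset[OF U fa_supp_fa_mult])
  also have "\<dots> = (\<Sum>w\<in>?U. \<Sum>x | x \<in> ?S \<times> ?T \<and> fst x @ snd x = w.
      const_mat2 (f (fst x) * g (snd x)) * word_eval A B (fst x @ snd x))"
    unfolding fa_mult_conv[OF S T subset_refl subset_refl] const_mat2_sum sum_distrib_right
    by (intro sum.cong) auto
  also have "\<dots> = (\<Sum>x\<in>?S \<times> ?T. const_mat2 (f (fst x) * g (snd x)) * word_eval A B (fst x @ snd x))"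
    by (rule sum.group[OF finite_cartesian_product[OF S T] U]) auto
  also have "\<dots> = (\<Sum>u\<in>?S. \<Sum>v\<in>?T.
      (const_mat2 (f u) * word_eval A B u) * (const_mat2 (g v) * word_eval A B v))"
    unfolding sum.cartesian_product
    by (intro sum.cong refl) (clarify, simp only: fst_conv snd_conv word_eval_append const_mat2_mult_mult)
  also have "\<dots> = fa_eval A B f * fa_eval A B g"
    by (simp add: fa_eval_def sum_product)
  finally show ?thesis .
qed

lemma fa_eval_sum:
  assumes "finite S" and "\<And>i. i \<in> S \<Longrightarrow> h i \<in> FA"
  shows "fa_eval A B (\<lambda>w. \<Sum>i\<in>S. h i w) = (\<Sum>i\<in>S. fa_eval A B (h i))"
  using assms
proof (induct S rule: finite_induct)
  case empty
  then show ?case by (simp add: fa_eval_def)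
next
  case (insert a S)
  then have "(\<lambda>w. \<Sum>i\<in>insert a S. h i w) = fa_add (h a) (\<lambda>w. \<Sum>i\<in>S. h i w)"
    by (simp add: fa_add_def)
  with insert show ?case by (simp add: fa_eval_add FA_sum)
qed

lemma fa_eval_poly_gen:
  "fa_eval A B (fa_poly_gen P c) = (\<Sum>i\<le>degree P. const_mat2 (coeff P i) * (if c then A else B) ^ i)"
proof -
  have inj: "inj_on (\<lambda>n. replicate n c) {..degree P}"
    by (rule inj_onI) (metis length_replicate)
  have "fa_eval A B (fa_poly_gen P c)
      = (\<Sum>w\<in>(\<lambda>n. replicate n c) ` {..degree P}. const_mat2 (fa_poly_gen P c w) * word_eval A B w)"
    by (rule fa_eval_superset[OF _ fa_supp_fa_poly_gen]) simp
  also have "\<dots> = (\<Sum>i\<le>degree P. const_mat2 (coeff P i) * (if c then A else B) ^ i)"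
    by (simp add: sum.reindex[OF inj] fa_poly_gen_def word_eval_replicate)
  finally show ?thesis .
qed

lemma fa_eval_poly_gen_monic_quadratic:
  assumes "degree P = 2" and "lead_coeff P = 1"
  shows "fa_eval A B (fa_poly_gen P c)
    = const_mat2 (coeff P 0) + const_mat2 (coeff P 1) * (if c then A else B) + (if c then A else B) ^ 2"
  using assms by (simp add: fa_eval_poly_gen numeral_2_eq_2)

section \<open>The representation in 2\<times>2 matrices over F[t]\<close>

definition rep_a :: "'k::field poly \<Rightarrow> 'k poly mat2" where
  "rep_a p = Mat2 0 [:- coeff p 0:] 1 [:- coeff p 1:]"

(* B = t + C with C the companion matrix of q(X + t) over F[t]; hence q(B) = 0. *)
definition rep_b :: "'k::field poly \<Rightarrow> 'k poly mat2" where
  "rep_b q = Mat2 [:0, 1:] [:- coeff q 0, - coeff q 1, -1:] 1 [:- coeff q 1, -1:]"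

abbreviation rep :: "'k::field poly \<Rightarrow> 'k poly \<Rightarrow> 'k falg \<Rightarrow> 'k poly mat2" where
  "rep p q \<equiv> fa_eval (rep_a p) (rep_b q)"

lemma rep_a_root: "const_mat2 (coeff p 0) + const_mat2 (coeff p 1) * rep_a p + rep_a p ^ 2 = 0"
  by (simp add: const_mat2_def scalar_mat2_def rep_a_def power2_eq_square mat2_eq_iff algebra_simps)

lemma rep_b_root: "const_mat2 (coeff q 0) + const_mat2 (coeff q 1) * rep_b q + rep_b q ^ 2 = 0"
  by (simp add: const_mat2_def scalar_mat2_def rep_b_def power2_eq_square mat2_eq_iff algebra_simps)

lemma adj2_rep_a: "adj2 (rep_a p) = const_mat2 (ptr p) - rep_a p"
  by (simp add: const_mat2_def scalar_mat2_def rep_a_def adj2_def ptr_def mat2_eq_iff)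

lemma adj2_rep_b: "adj2 (rep_b q) = const_mat2 (ptr q) - rep_b q"
  by (simp add: const_mat2_def scalar_mat2_def rep_b_def adj2_def ptr_def mat2_eq_iff)

lemma degree_le_mat2_rep_a: "degree_le_mat2 0 (rep_a p)"
  by (simp add: degree_le_mat2_def set_mat2_eq rep_a_def)

lemma degree_le_mat2_rep_b: "degree_le_mat2 2 (rep_b q)"
  by (simp add: degree_le_mat2_def set_mat2_eq rep_b_def degree_pCons_eq_if)

lemma rep_eq_0_if_W_ideal:
  assumes "degree p = 2" "lead_coeff p = 1" "degree q = 2" "lead_coeff q = 1"
    and "f \<in> W_ideal p q"
  shows "rep p q f = 0"
  using assms(5)
proof (induct rule: W_ideal.induct)
  case gen_p
  show ?case using assms(1,2) rep_a_root[of p] by (simp add: fa_eval_poly_gen_monic_quadratic)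
next
  case gen_q
  show ?case using assms(3,4) rep_b_root[of q] by (simp add: fa_eval_poly_gen_monic_quadratic)
next
  case (add f g)
  then show ?case by (simp add: fa_eval_add W_ideal_subset_FA)
next
  case (mult f g h)
  then show ?case by (simp add: fa_eval_mult FA_mult W_ideal_subset_FA)
qed

lemma gen_star_eq:
  "gen_star p q c = fa_add (fa_scale (if c then ptr p else ptr q) fa_one) (fa_scale (-1) (fa_word [c]))"
  by (auto simp: gen_star_def fa_add_def fa_scale_def)

lemma FA_word_star: "word_star p q w \<in> FA"
  by (induct w) (simp_all add: FA_one FA_mult gen_star_eq FA_add FA_scale FA_word)

lemma rep_word_star: "rep p q (word_star p q w) = adj2 (word_eval (rep_a p) (rep_b q) w)"
proof (induct w)
  case Nil
  show ?case by (simp add: fa_one_def fa_eval_word adj2_def mat2_eq_iff)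
next
  case (Cons c w)
  have "rep p q (gen_star p q c) = adj2 (if c then rep_a p else rep_b q)"
    by (simp add: gen_star_eq FA_scale FA_one FA_word fa_eval_add fa_eval_scale fa_eval_word
        fa_one_def adj2_rep_a adj2_rep_b)
  with Cons show ?case
    by (simp add: fa_eval_mult FA_word_star gen_star_eq FA_add FA_scale FA_one FA_word adj2_mult)
qed

lemma fa_star_eq_sum: "fa_star p q x = (\<lambda>u. \<Sum>w\<in>fa_supp x. fa_scale (x w) (word_star p q w) u)"
  by (simp add: fa_star_def fa_scale_def)

lemma FA_fa_star: "x \<in> FA \<Longrightarrow> fa_star p q x \<in> FA"
  unfolding fa_star_eq_sum by (intro FA_sum FA_scale FA_word_star) (simp add: FA_iff)

lemma rep_fa_star:
  assumes "x \<in> FA"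
  shows "rep p q (fa_star p q x) = adj2 (rep p q x)"
proof -
  have "rep p q (fa_star p q x) = (\<Sum>w\<in>fa_supp x. rep p q (fa_scale (x w) (word_star p q w)))"
    unfolding fa_star_eq_sum using assms
    by (intro fa_eval_sum FA_scale FA_word_star) (simp add: FA_iff)
  also have "\<dots> = (\<Sum>w\<in>fa_supp x. const_mat2 (x w) * adj2 (word_eval (rep_a p) (rep_b q) w))"
    by (simp add: fa_eval_scale rep_word_star)
  also have "\<dots> = adj2 (rep p q x)"
    by (simp add: fa_eval_def adj2_sum adj2_const_mult)
  finally show ?thesis .
qed

lemma FA_W_norm: "x \<in> FA \<Longrightarrow> W_norm p q x \<in> FA"
  by (simp add: W_norm_def FA_mult FA_fa_star)

lemma rep_W_norm: "x \<in> FA \<Longrightarrow> rep p q (W_norm p q x) = scalar_mat2 (det2 (rep p q x))"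
  by (simp add: W_norm_def fa_eval_mult FA_fa_star rep_fa_star mult_adj2)

section \<open>Alternating words\<close>

fun alt :: "bool \<Rightarrow> nat \<Rightarrow> bool list" where
  "alt c 0 = []"
| "alt c (Suc k) = c # alt (\<not> c) k"

definition alternating :: "bool list \<Rightarrow> bool" where
  "alternating w \<longleftrightarrow> (\<exists>c k. w = alt c k)"

lemma alternating_alt [simp]: "alternating (alt c k)"
  unfolding alternating_def by blast

lemma alt_Suc_Suc: "alt c (Suc (Suc k)) = c # (\<not> c) # alt c k"
  by simp

lemma length_alt [simp]: "length (alt c k) = k"
  by (induct k arbitrary: c) auto

lemma alt_eq_iff: "alt c k = alt d l \<longleftrightarrow> k = l \<and> (k = 0 \<or> c = d)"
  by (cases k; cases l) (auto dest: arg_cong[of _ _ length])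

lemma alternating_or_square: "alternating w \<or> (\<exists>u c v. w = u @ c # c # v)"
proof (induct w)
  case Nil
  show ?case using alternating_alt[of True 0] by simp
next
  case (Cons d w)
  show ?case
  proof (cases "alternating w")
    case True
    then obtain c k where w: "w = alt c k" unfolding alternating_def by blast
    show ?thesis
    proof (cases "k = 0 \<or> d \<noteq> c")
      case True
      then have "d # w = alt d (Suc k)" using w by (cases k) auto
      then show ?thesis unfolding alternating_def by blast
    next
      case False
      then obtain k' where "d # w = [] @ d # d # alt (\<not> c) k'" using w by (cases k) auto
      then show ?thesis by blast
    qed
  next
    case False
    with Cons obtain u c v where "d # w = (d # u) @ c # c # v" by auto
    then show ?thesis by blast
  qed
qed

lemma count_alt: "count_list (alt c k) False = (if c then k div 2 else (k + 1) div 2)"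
  by (induct k arbitrary: c) auto

definition alternating_with_b_count :: "nat \<Rightarrow> bool list set" where
  "alternating_with_b_count m = {w. alternating w \<and> count_list w False = m}"

lemma alternating_with_b_count_0: "alternating_with_b_count 0 = {[], [True]}"
proof -
  have "w \<in> {[], [True]}" if "alternating w" and "count_list w False = 0" for w
  proof -
    obtain c k where w: "w = alt c k" using \<open>alternating w\<close> unfolding alternating_def by blast
    with that(2) have "c \<and> k = 1 \<or> k = 0"
      by (cases c) (simp_all add: count_alt, presburger+)
    with w show ?thesis by auto
  qed
  moreover have "alternating []" and "alternating [True]"
    using alternating_alt[of True 0] alternating_alt[of True 1] by simp_all
  ultimately show ?thesis
    unfolding alternating_with_b_count_def by auto
qed

lemma alternating_with_b_count_Suc:
  "alternating_with_b_count (Suc j)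
    = {alt False (2 * j + 1), alt True (2 * j + 2), alt False (2 * j + 2), alt True (2 * j + 3)}"
proof -
  have "w \<in> {alt False (2 * j + 1), alt True (2 * j + 2), alt False (2 * j + 2), alt True (2 * j + 3)}"
    if "alternating w" and "count_list w False = Suc j" for w
  proof -
    obtain c k where w: "w = alt c k" using \<open>alternating w\<close> unfolding alternating_def by blast
    with that(2) have "c \<and> (k = 2 * j + 2 \<or> k = 2 * j + 3) \<or> \<not> c \<and> (k = 2 * j + 1 \<or> k = 2 * j + 2)"
      by (cases c) (simp_all add: count_alt, presburger+)
    with w show ?thesis by auto
  qed
  then show ?thesis
    unfolding alternating_with_b_count_def by (auto simp: count_alt simp del: alt.simps)
qed

lemma finite_alternating_with_b_count: "finite (alternating_with_b_count m)"
  by (cases m) (simp_all add: alternating_with_b_count_0 alternating_with_b_count_Suc)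

section \<open>Faithfulness\<close>

lemma top_coeff_word_eval_alt:
  fixes p q :: "'k::field poly"
  defines "A \<equiv> coeff_mat2 (rep_a p) 0" and "B \<equiv> coeff_mat2 (rep_b q) 2"
  shows "word_eval A B (alt False (2 * j + 1)) = scalar_mat2 ((-1) ^ j) * B"
    and "word_eval A B (alt True (2 * j + 2)) = scalar_mat2 ((-1) ^ j) * (A * B)"
    and "word_eval A B (alt False (2 * j + 2)) = scalar_mat2 ((-1) ^ j) * (B * A)"
    and "word_eval A B (alt True (2 * j + 3)) = scalar_mat2 ((-1) ^ j) * (A * B * A)"
proof -
  have A: "A = Mat2 0 (- coeff p 0) 1 (- coeff p 1)" and B: "B = Mat2 0 (-1) 0 0"
    by (simp_all add: A_def B_def rep_a_def rep_b_def mat2_eq_iff numeral_2_eq_2)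
  \<comment> \<open>The signs come from \<open>B * A * B = - B\<close>.\<close>
  have BA: "B * (A * (scalar_mat2 c * M)) = scalar_mat2 (- c) * M" if "M \<in> {B, B * A}" for c M
    using that unfolding A B by (auto simp: scalar_mat2_def mat2_eq_iff)
  have AB: "A * (B * (scalar_mat2 c * M)) = scalar_mat2 (- c) * M" if "M \<in> {A * B, A * B * A}" for c M
    using that unfolding A B by (auto simp: scalar_mat2_def mat2_eq_iff)
  have "word_eval A B (alt False (2 * j + 1)) = scalar_mat2 ((-1) ^ j) * B
      \<and> word_eval A B (alt True (2 * j + 2)) = scalar_mat2 ((-1) ^ j) * (A * B)
      \<and> word_eval A B (alt False (2 * j + 2)) = scalar_mat2 ((-1) ^ j) * (B * A)
      \<and> word_eval A B (alt True (2 * j + 3)) = scalar_mat2 ((-1) ^ j) * (A * B * A)"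
  proof (induct j)
    case 0
    show ?case by (simp add: numeral_3_eq_3 mult.assoc)
  next
    case (Suc j)
    have "2 * Suc j + r = Suc (Suc (2 * j + r))" for r by simp
    with Suc show ?case
      by (simp only: alt_Suc_Suc word_eval_simps if_True if_False not_True_eq_False not_False_eq_True)
        (simp add: BA AB)
  qed
  then show "word_eval A B (alt False (2 * j + 1)) = scalar_mat2 ((-1) ^ j) * B"
    and "word_eval A B (alt True (2 * j + 2)) = scalar_mat2 ((-1) ^ j) * (A * B)"
    and "word_eval A B (alt False (2 * j + 2)) = scalar_mat2 ((-1) ^ j) * (B * A)"
    and "word_eval A B (alt True (2 * j + 3)) = scalar_mat2 ((-1) ^ j) * (A * B * A)"
    by auto
qed

lemma top_coeffs_alternating_independent:
  fixes p q :: "'k::field poly"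
  defines "A \<equiv> coeff_mat2 (rep_a p) 0" and "B \<equiv> coeff_mat2 (rep_b q) 2"
  assumes vanish: "(\<Sum>w\<in>alternating_with_b_count m. scalar_mat2 (g w) * word_eval A B w) = 0"
    and w: "w \<in> alternating_with_b_count m"
  shows "g w = 0"
proof -
  have A: "A = Mat2 0 (- coeff p 0) 1 (- coeff p 1)" and B: "B = Mat2 0 (-1) 0 0"
    by (simp_all add: A_def B_def rep_a_def rep_b_def mat2_eq_iff numeral_2_eq_2)
  show ?thesis
  proof (cases m)
    case 0
    with vanish w show ?thesis
      by (auto simp: alternating_with_b_count_0 A scalar_mat2_def mat2_eq_iff)
  next
    case (Suc j)
    define w1 w2 w3 w4 where "w1 = alt False (2 * j + 1)" and "w2 = alt True (2 * j + 2)"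
      and "w3 = alt False (2 * j + 2)" and "w4 = alt True (2 * j + 3)"
    let ?s = "scalar_mat2 ((-1) ^ j :: 'k)"
    have words: "alternating_with_b_count m = {w1, w2, w3, w4}"
      unfolding Suc w1_def w2_def w3_def w4_def by (rule alternating_with_b_count_Suc)
    have "w1 \<noteq> w2" "w1 \<noteq> w3" "w1 \<noteq> w4" "w2 \<noteq> w3" "w2 \<noteq> w4" "w3 \<noteq> w4"
      unfolding w1_def w2_def w3_def w4_def by (simp_all del: alt.simps add: alt_eq_iff)
    moreover have "word_eval A B w1 = ?s * B" "word_eval A B w2 = ?s * (A * B)"
      "word_eval A B w3 = ?s * (B * A)" "word_eval A B w4 = ?s * (A * B * A)"
      unfolding w1_def w2_def w3_def w4_def A_def B_def by (fact top_coeff_word_eval_alt)+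
    ultimately have "scalar_mat2 (g w1) * (?s * B) + (scalar_mat2 (g w2) * (?s * (A * B))
        + (scalar_mat2 (g w3) * (?s * (B * A)) + scalar_mat2 (g w4) * (?s * (A * B * A)))) = 0"
      using vanish unfolding words by simp
    then have "g w1 = 0 \<and> g w2 = 0 \<and> g w3 = 0 \<and> g w4 = 0"
      by (simp add: A B scalar_mat2_def mat2_eq_iff) (metis mult_zero_left)
    with w show ?thesis
      unfolding words by auto
  qed
qed

lemma coeff_mat2_rep_word:
  assumes "count_list w False \<le> N"
  shows "coeff_mat2 (word_eval (rep_a p) (rep_b q) w) (2 * N)
    = (if count_list w False = N
       then word_eval (coeff_mat2 (rep_a p) 0) (coeff_mat2 (rep_b q) 2) w else 0)"
proof -
  have "degree_le_mat2 (2 * count_list w False) (word_eval (rep_a p) (rep_b q) w)"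
    using degree_le_mat2_word_eval[OF degree_le_mat2_rep_a degree_le_mat2_rep_b, where w = w]
    by simp
  moreover have "coeff_mat2 (word_eval (rep_a p) (rep_b q) w) (2 * count_list w False)
      = word_eval (coeff_mat2 (rep_a p) 0) (coeff_mat2 (rep_b q) 2) w"
    using coeff_mat2_word_eval[OF degree_le_mat2_rep_a degree_le_mat2_rep_b, where w = w]
    by simp
  ultimately show ?thesis
    using assms by (auto intro: coeff_mat2_eq_0)
qed

lemma alternating_eq_0_if_rep_eq_0:
  assumes "f \<in> FA" and alt: "\<forall>w\<in>fa_supp f. alternating w" and "rep p q f = 0"
  shows "f w = 0"
proof (rule ccontr)
  assume "f w \<noteq> 0"
  let ?S = "fa_supp f" and ?b = "\<lambda>w. count_list w False"
  let ?word = "word_eval (rep_a p) (rep_b q)"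
  let ?top = "word_eval (coeff_mat2 (rep_a p) 0) (coeff_mat2 (rep_b q) 2)"
  define M where "M = Max (?b ` ?S)"
  have S: "finite ?S" using assms(1) by (simp add: FA_iff)
  obtain w0 where w0: "w0 \<in> ?S" "?b w0 = M"
    using Max_in[of "?b ` ?S"] S \<open>f w \<noteq> 0\<close> unfolding M_def by fastforce
  \<comment> \<open>Compare coefficients of \<open>t ^ (2 * M)\<close>: only the words with \<open>M\<close> letters \<open>b\<close>
    contribute, through their leading coefficients, which are linearly independent.\<close>
  have "0 = coeff_mat2 (rep p q f) (2 * M)"
    using assms(3) by simp
  also have "\<dots> = (\<Sum>v\<in>?S. scalar_mat2 (f v) * coeff_mat2 (?word v) (2 * M))"
    by (simp add: fa_eval_def coeff_mat2_sum coeff_mat2_const_mult)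
  also have "\<dots> = (\<Sum>v\<in>?S. if ?b v = M then scalar_mat2 (f v) * ?top v else 0)"
    using S by (intro sum.cong) (simp_all add: coeff_mat2_rep_word M_def)
  also have "\<dots> = (\<Sum>v\<in>?S \<inter> alternating_with_b_count M. scalar_mat2 (f v) * ?top v)"
  proof -
    have "?S \<inter> {v. ?b v = M} = ?S \<inter> alternating_with_b_count M"
      using alt by (auto simp: alternating_with_b_count_def)
    then show ?thesis
      by (simp only: sum.If_cases[OF S] sum.neutral_const add_0_right)
  qed
  also have "\<dots> = (\<Sum>v\<in>alternating_with_b_count M. scalar_mat2 (f v) * ?top v)"
    by (intro sum.mono_neutral_left finite_alternating_with_b_count) auto
  finally have "f w0 = 0"
    using top_coeffs_alternating_independent[where p = p and q = q and g = f and m = M and w = w0] alt w0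
    by (simp add: alternating_with_b_count_def)
  with w0 show False by simp
qed

(* Rewriting u c c v into u c v and u v lowers the weight, as 3^(n+1) + 3^n < 3^(n+2). *)
definition fa_weight :: "'k::field falg \<Rightarrow> nat" where
  "fa_weight f = (\<Sum>w\<in>fa_supp f. 3 ^ length w)"

lemma fa_weight_less:
  assumes "finite (fa_supp f)" and "w \<in> fa_supp f" and "finite S"
    and "fa_supp g \<subseteq> (fa_supp f - {w}) \<union> S" and "(\<Sum>v\<in>S. 3 ^ length v) < (3::nat) ^ length w"
  shows "fa_weight g < fa_weight f"
proof -
  let ?W = "\<lambda>A. \<Sum>v\<in>A. (3::nat) ^ length v"
  have "fa_weight g \<le> ?W ((fa_supp f - {w}) \<union> S)"
    unfolding fa_weight_def using assms(1,3,4) by (intro sum_mono2) auto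
  also have "\<dots> \<le> ?W (fa_supp f - {w}) + ?W S"
    using sum.union_inter[of "fa_supp f - {w}" S "\<lambda>v. (3::nat) ^ length v"] assms(1,3) by simp
  also have "\<dots> < ?W (fa_supp f - {w}) + 3 ^ length w"
    using assms(5) by simp
  also have "\<dots> = fa_weight f"
    unfolding fa_weight_def using assms(1,2) by (simp add: sum.remove)
  finally show ?thesis .
qed

lemma reduce_square:
  assumes "degree p = 2" "lead_coeff p = 1" "degree q = 2" "lead_coeff q = 1"
    and "f \<in> FA" and "f w \<noteq> 0" and w: "w = u @ c # c # v"
  obtains f' D where "f' \<in> FA" and "D \<in> W_ideal p q" and "f = fa_add f' D"
    and "fa_weight f' < fa_weight f"
proof -
  define P where "P = (if c then p else q)"
  have P: "degree P = 2" "coeff P 2 = 1" using assms(1-4) by (simp_all add: P_def)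
  define R where "R = fa_mult (fa_word u) (fa_mult (fa_poly_gen P c) (fa_word v))"
  have R: "R \<in> W_ideal p q" unfolding R_def P_def by (rule W_ideal_sandwich)
  have "R w = 1"
    using fa_sandwich_at[of u "fa_poly_gen P c" v "[c, c]"] P(2) w
    by (simp add: R_def fa_poly_gen_def numeral_2_eq_2)
  define f' where "f' = fa_add f (fa_scale (- f w) R)"
  have "f' \<in> FA" unfolding f'_def using assms(5) R by (simp add: FA_add FA_scale W_ideal_subset_FA)
  moreover have "fa_scale (f w) R \<in> W_ideal p q" using R by (rule W_ideal_scale)
  moreover have "f = fa_add f' (fa_scale (f w) R)"
    by (simp add: f'_def fa_add_def fa_scale_def)
  moreover have "fa_weight f' < fa_weight f"
  proof (rule fa_weight_less)
    show "finite (fa_supp f)" using assms(5) by (simp add: FA_iff)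
    show "w \<in> fa_supp f" using assms(6) by simp
    show "(\<Sum>x\<in>{u @ v, u @ [c] @ v}. 3 ^ length x) < (3::nat) ^ length w"
      using w by simp
    have "fa_supp R \<subseteq> {u @ v, u @ [c] @ v, w}"
      using fa_supp_sandwich_poly_gen[of u P c v] P(1) w
      unfolding R_def by (auto simp: numeral_2_eq_2 atMost_Suc)
    moreover have "fa_supp f' \<subseteq> (fa_supp f \<union> fa_supp R) - {w}"
      using \<open>R w = 1\<close> by (auto simp: f'_def fa_add_def fa_scale_def)
    ultimately show "fa_supp f' \<subseteq> (fa_supp f - {w}) \<union> {u @ v, u @ [c] @ v}"
      by auto
  qed simp
  ultimately show thesis by (rule that)
qed

lemma exists_alternating_normal_form:
  assumes "degree p = 2" "lead_coeff p = 1" "degree q = 2" "lead_coeff q = 1"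
    and "f \<in> FA"
  shows "\<exists>g D. g \<in> FA \<and> (\<forall>w\<in>fa_supp g. alternating w) \<and> D \<in> W_ideal p q \<and> f = fa_add g D"
  using assms(5)
proof (induct "fa_weight f" arbitrary: f rule: less_induct)
  case less
  show ?case
  proof (cases "\<forall>w\<in>fa_supp f. alternating w")
    case True
    have "f = fa_add f (\<lambda>w. 0)" by (simp add: fa_add_def)
    with True less.prems W_ideal_zero show ?thesis by blast
  next
    case False
    then obtain w where "f w \<noteq> 0" and "\<not> alternating w" by auto
    then obtain u c v where "w = u @ c # c # v" using alternating_or_square by blast
    with assms(1-4) less.prems \<open>f w \<noteq> 0\<close> obtain f' D1 where
      "f' \<in> FA" and D1: "D1 \<in> W_ideal p q" and f: "f = fa_add f' D1"
      and "fa_weight f' < fa_weight f"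
      by (rule reduce_square)
    with less.hyps obtain g D2 where "g \<in> FA" "\<forall>w\<in>fa_supp g. alternating w"
      and D2: "D2 \<in> W_ideal p q" and f': "f' = fa_add g D2"
      by blast
    have "f = fa_add g (fa_add D2 D1)"
      by (simp add: f f' fa_add_def add.assoc)
    moreover have "fa_add D2 D1 \<in> W_ideal p q"
      using D2 D1 by (rule W_ideal.add)
    ultimately show ?thesis
      using \<open>g \<in> FA\<close> \<open>\<forall>w\<in>fa_supp g. alternating w\<close> by blast
  qed
qed

lemma W_ideal_iff_rep_eq_0:
  assumes "degree p = 2" "lead_coeff p = 1" "degree q = 2" "lead_coeff q = 1"
    and "f \<in> FA"
  shows "f \<in> W_ideal p q \<longleftrightarrow> rep p q f = 0"
proof
  assume "f \<in> W_ideal p q"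
  with assms(1-4) show "rep p q f = 0" by (rule rep_eq_0_if_W_ideal)
next
  assume "rep p q f = 0"
  obtain g D where g: "g \<in> FA" "\<forall>w\<in>fa_supp g. alternating w" and D: "D \<in> W_ideal p q"
    and f: "f = fa_add g D"
    using exists_alternating_normal_form[OF assms] by blast
  have "rep p q g = 0"
    using \<open>rep p q f = 0\<close> rep_eq_0_if_W_ideal[OF assms(1-4) D] g(1) D
    by (simp add: f fa_eval_add W_ideal_subset_FA)
  then have "g = (\<lambda>w. 0)"
    using alternating_eq_0_if_rep_eq_0[OF g] by blast
  with D show "f \<in> W_ideal p q"
    by (simp add: f fa_add_def)
qed

theorem mainTheorem16:
  fixes p q :: "'k::field poly" and x :: "'k falg"
  assumes "degree p = 2" and "lead_coeff p = 1"
    and "degree q = 2" and "lead_coeff q = 1"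
    and "x \<in> FA" and "x \<notin> W_ideal p q"
  shows "(\<exists>y\<in>FA. y \<notin> W_ideal p q \<and>
            (fa_mult x y \<in> W_ideal p q \<or> fa_mult y x \<in> W_ideal p q))
         \<longleftrightarrow> W_norm p q x \<in> W_ideal p q"
proof -
  note kernel = W_ideal_iff_rep_eq_0[OF assms(1-4)]
  have x: "rep p q x \<noteq> 0" using assms(5,6) kernel by blast
  show ?thesis
  proof
    assume "\<exists>y\<in>FA. y \<notin> W_ideal p q \<and> (fa_mult x y \<in> W_ideal p q \<or> fa_mult y x \<in> W_ideal p q)"
    then obtain y where "y \<in> FA" and "rep p q y \<noteq> 0"
      and "rep p q x * rep p q y = 0 \<or> rep p q y * rep p q x = 0"
      using assms(5) by (auto simp: kernel FA_mult fa_eval_mult)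
    then have "det2 (rep p q x) = 0"
      by (auto intro: det2_eq_0_if_mult_right_eq_0 det2_eq_0_if_mult_left_eq_0)
    then show "W_norm p q x \<in> W_ideal p q"
      using assms(5) by (simp add: kernel FA_W_norm rep_W_norm)
  next
    assume "W_norm p q x \<in> W_ideal p q"
    moreover have "fa_star p q x \<notin> W_ideal p q"
      using assms(5) x by (simp add: kernel FA_fa_star rep_fa_star)
    ultimately show "\<exists>y\<in>FA. y \<notin> W_ideal p q \<and> (fa_mult x y \<in> W_ideal p q \<or> fa_mult y x \<in> W_ideal p q)"
      using assms(5) FA_fa_star unfolding W_norm_def by blast
  qed
qed

end
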